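(* Let $\mathcal{P}\subset\mathbb{R}^3$ be a polyhedron with radius $1$ and let $P_1,P_2,P_3,Q_1,Q_2,Q_3\in\mathcal{P}$ (not necessarily distinct) such that the triples $(P_1,P_2,P_3)$ and $(Q_1,Q_2,Q_3)$ are congruent. Let $\varepsilon>0$ and $\bar\theta_1,\bar\varphi_1,\bar\theta_2,\bar\varphi_2,\bar\alpha\in\mathbb{R}$; set $\overline{X_k}=X(\bar\theta_k,\bar\varphi_k)$, $\overline{M_k}=M(\bar\theta_k,\bar\varphi_k)$ for $k=1,2$. Assume: (A) there exist $\sigma_P,\sigma_Q\in\{0,1\}$ with $(-1)^{\sigma_P}\langle\overline{X_1},P_i\rangle>\sqrt2\varepsilon$ and $(-1)^{\sigma_Q}\langle\overline{X_2},Q_i\rangle>\sqrt2\varepsilon$ for $i=1,2,3$; (S) $P_1,P_2,P_3$ are $\varepsilon$-spanning for $(\bar\theta_1,\bar\varphi_1)$ and $Q_1,Q_2,Q_3$ are $\varepsilon$-spanning for $(\bar\theta_2,\bar\varphi_2)$; (B) there are $r>0$ with $\min_{i=1,2,3}\|\overline{M_2}Q_i\|>r+\sqrt2\varepsilon$ and $\delta\in\mathbb{R}$ with $\delta\ge\max_{i=1,2,3}\|R(\bar\alpha)\overline{M_1}P_i-\overline{M_2}Q_i\|/2$, such that for all $i=1,2,3$ and every $Q_j\in\mathcal{P}\setminus\{Q_i\}$, \[ \frac{\langle\overline{M_2}Q_i,\overline{M_2}(Q_i-Q_j)\rangle-2\varepsilon\|Q_i-Q_j\|(\sqrt2+\varepsilon)}{(\|\overline{M_2}Q_i\|+\sqrt2\varepsilon)(\|\overline{M_2}(Q_i-Q_j)\|+2\sqrt2\varepsilon)}>\frac{\sqrt5\varepsilon+\delta}{r}.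 \] Then there is no $(\theta_1,\varphi_1,\theta_2,\varphi_2,\alpha)$ with $|\theta_k-\bar\theta_k|,|\varphi_k-\bar\varphi_k|,|\alpha-\bar\alpha|\le\varepsilon$ ($k=1,2$) such that $R(\alpha)M(\theta_1,\varphi_1)\mathcal{P}\subset\operatorname{int}\operatorname{conv}(M(\theta_2,\varphi_2)\mathcal{P})$.
   Context: $R(\alpha)=\begin{pmatrix}\cos\alpha&-\sin\alpha\\ \sin\alpha&\cos\alpha\end{pmatrix}$; $X(\theta,\varphi)=(\cos\theta\sin\varphi,\sin\theta\sin\varphi,\cos\varphi)^t$; $M(\theta,\varphi)=\begin{pmatrix}-\sin\theta&\cos\theta&0\\ -\cos\theta\cos\varphi&-\sin\theta\cos\varphi&\sin\varphi\end{pmatrix}$. A polyhedron is a finite non-degenerate set of points of $\mathbb{R}^3$ in convex position; radius $1$ means all its points have norm $\le1$ with equality for some. Triples $(P_1,P_2,P_3)$, $(Q_1,Q_2,Q_3)$ in $\mathbb{R}^3$ are congruent if there is an orthonormal $L\in\mathbb{R}^{3\times3}$ with $P_i=LQ_i$ for $i=1,2,3$. Given $\theta,\varphi\in\mathbb{R}$, $\varepsilon>0$ and $M=M(\theta,\varphi)$, points $P_1,P_2,P_3\in\mathbb{R}^3$ with norms $\le1$ are $\varepsilon$-spanning for $(\theta,\varphi)$ if $\langle R(\pi/2)MP_1,MP_2\rangle$, $\langle R(\pi/2)MP_2,MP_3\rangle$, $\langle R(\pi/2)MP_3,MP_1\rangle$ are all $>2\varepsilon(\sqrt2+\varepsilon)$.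 Matrices act on point sets elementwise; norms of matrices are operator norms. *)

theory Defs
  imports "HOL-Analysis.Analysis"
begin

definition rotR :: "real \<Rightarrow> real^2^2" where
  "rotR a = vector [vector [cos a, - sin a], vector [sin a, cos a]]"

definition Xvec :: "real \<Rightarrow> real \<Rightarrow> real^3" where
  "Xvec th ph = vector [cos th * sin ph, sin th * sin ph, cos ph]"

definition Mmat :: "real \<Rightarrow> real \<Rightarrow> real^3^2" where
  "Mmat th ph = vector [vector [- sin th, cos th, 0],
                        vector [- cos th * cos ph, - sin th * cos ph, sin ph]]"

definition is_polyhedron :: "(real^3) set \<Rightarrow> bool" where
  "is_polyhedron S \<longleftrightarrow> finite S \<and> aff_dim S = 3 \<and>
     (\<forall>p\<in>S. p \<notin> convex hull (S - {p}))"

definition has_radius_one :: "(real^3) set \<Rightarrow> bool" where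
  "has_radius_one S \<longleftrightarrow> (\<forall>p\<in>S. norm p \<le> 1) \<and> (\<exists>p\<in>S. norm p = 1)"

definition congruent_triples ::
  "real^3 \<Rightarrow> real^3 \<Rightarrow> real^3 \<Rightarrow> real^3 \<Rightarrow> real^3 \<Rightarrow> real^3 \<Rightarrow> bool" where
  "congruent_triples P1 P2 P3 Q1 Q2 Q3 \<longleftrightarrow>
     (\<exists>L::real^3^3. orthogonal_matrix L \<and>
        P1 = L *v Q1 \<and> P2 = L *v Q2 \<and> P3 = L *v Q3)"

definition eps_spanning ::
  "real \<Rightarrow> real \<Rightarrow> real \<Rightarrow> real^3 \<Rightarrow> real^3 \<Rightarrow> real^3 \<Rightarrow> bool" where
  "eps_spanning th ph \<epsilon> P1 P2 P3 \<longleftrightarrow>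
     norm P1 \<le> 1 \<and> norm P2 \<le> 1 \<and> norm P3 \<le> 1 \<and>
     (let M = Mmat th ph; c = 2 * \<epsilon> * (sqrt 2 + \<epsilon>) in
       inner (rotR (pi/2) *v (M *v P1)) (M *v P2) > c \<and>
       inner (rotR (pi/2) *v (M *v P2)) (M *v P3) > c \<and>
       inner (rotR (pi/2) *v (M *v P3)) (M *v P1) > c)"

end

theory Submission
  imports Defs
begin

(* Suppose some perturbed parameters within epsilon of the given ones realise
   R(a) M1 P inside int conv (M2 P). All maps involved move by at most sqrt 2 * epsilon
   per unit vector when the angles move by at most epsilon (mean value theorem), so
   conditions (A) and (S) survive the perturbation: the components of Q1, Q2, Q3 along
   X2 have one sign, and M2 Q1, M2 Q2, M2 Q3 surround the origin. Hence a positive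
   combination Z of the Q_i lies in the kernel of M2, i.e. on the line through X2.
   Comparing Z with the unit vector L^T X1, where L is the congruence, yields an index i
   with |<X1, P_i>| <= |<X2, Q_i>|, i.e. |M1 P_i| >= |M2 Q_i|.
   By (B), near v = M2 Q_i the shadow M2 P lies in the cone <v, v - u> >= kappa |v| |v - u|
   with kappa = (sqrt 5 * epsilon + delta) / r, and so does its convex hull. A point w of
   its interior with |w| >= |v| then satisfies |v - w| >= 2 kappa |v| > 2 (sqrt 5 * epsilon + delta),
   while w = R(a) M1 P_i lies within (1 + 2 sqrt 2) epsilon + 2 delta of v. *)

lemma inner_vec2: "inner (x::real^2) y = x$1 * y$1 + x$2 * y$2"
  by (simp add: inner_vec_def sum_2)

lemma inner_vec3: "inner (x::real^3) y = x$1 * y$1 + x$2 * y$2 + x$3 * y$3"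
  by (simp add: inner_vec_def sum_3)

lemma norm_vec2_power2: "(norm (x::real^2))\<^sup>2 = (x$1)\<^sup>2 + (x$2)\<^sup>2"
  unfolding power2_norm_eq_inner inner_vec2 by (simp add: power2_eq_square)

lemma norm_vec3_power2: "(norm (x::real^3))\<^sup>2 = (x$1)\<^sup>2 + (x$2)\<^sup>2 + (x$3)\<^sup>2"
  unfolding power2_norm_eq_inner inner_vec3 by (simp add: power2_eq_square)

lemma Xvec_component:
  "Xvec t f $ 1 = cos t * sin f" "Xvec t f $ 2 = sin t * sin f" "Xvec t f $ 3 = cos f"
  by (simp_all add: Xvec_def)

lemma Mmat_mult_component:
  "(Mmat t f *v p) $ 1 = - sin t * p$1 + cos t * p$2"
  "(Mmat t f *v p) $ 2 = - cos t * cos f * p$1 - sin t * cos f * p$2 + sin f * p$3"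
  by (simp_all add: Mmat_def matrix_vector_mult_def sum_3)

lemma rotR_mult_component:
  "(rotR a *v v) $ 1 = cos a * v$1 - sin a * v$2"
  "(rotR a *v v) $ 2 = sin a * v$1 + cos a * v$2"
  by (simp_all add: rotR_def matrix_vector_mult_def sum_2)

lemma norm_vector3: "norm (vector [x, y, z] :: real^3) = sqrt (x\<^sup>2 + y\<^sup>2 + z\<^sup>2)"
  by (simp add: norm_eq_sqrt_inner inner_vec3 power2_eq_square)

lemma norm_Xvec [simp]: "norm (Xvec t f) = 1"
  by (simp add: Xvec_def norm_vector3 power_mult_distrib flip: distrib_right)

lemma norm_Mmat_mult_power2: "(norm (Mmat t f *v p))\<^sup>2 = (norm p)\<^sup>2 - (inner (Xvec t f) p)\<^sup>2"
  unfolding norm_vec2_power2 norm_vec3_power2 Mmat_mult_component inner_vec3 Xvec_component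
  using sin_cos_squared_add[of t] sin_cos_squared_add[of f] by algebra

lemma norm_Mmat_mult_le: "norm (Mmat t f *v p) \<le> norm p"
  by (rule power2_le_imp_le) (simp_all add: norm_Mmat_mult_power2)

lemma norm_rotR_mult [simp]: "norm (rotR a *v v) = norm v"
proof -
  have "(norm (rotR a *v v))\<^sup>2 = (norm v)\<^sup>2"
    unfolding norm_vec2_power2 rotR_mult_component using sin_cos_squared_add[of a] by algebra
  then show ?thesis
    by simp
qed

lemma norm_diff_le_of_inner_derivative:
  fixes \<gamma> \<gamma>' :: "real \<Rightarrow> 'a::real_inner"
  assumes deriv: "\<And>d s. ((\<lambda>s. inner d (\<gamma> s)) has_real_derivative inner d (\<gamma>' s)) (at s)"
    and bound: "\<And>s. norm (\<gamma>' s) \<le> B"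
  shows "norm (\<gamma> 1 - \<gamma> 0) \<le> B"
proof -
  define d where "d = \<gamma> 1 - \<gamma> 0"
  obtain s where "inner d (\<gamma> 1) - inner d (\<gamma> 0) = (1 - 0) * inner d (\<gamma>' s)"
    using MVT2[of 0 1 "\<lambda>s. inner d (\<gamma> s)" "\<lambda>s. inner d (\<gamma>' s)"] deriv by auto
  then have "(norm d)\<^sup>2 = inner d (\<gamma>' s)"
    by (simp add: d_def power2_norm_eq_inner inner_diff_right)
  also have "\<dots> \<le> norm d * B"
    using norm_cauchy_schwarz[of d "\<gamma>' s"] bound[of s] by (meson mult_left_mono norm_ge_zero order_trans)
  finally show ?thesis
    using order_trans[OF norm_ge_zero bound] by (cases "d = 0") (auto simp: d_def power2_eq_square)
qed

lemma sqrt_sum_squares_le: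
  fixes a b e :: real
  assumes "\<bar>a\<bar> \<le> e" "\<bar>b\<bar> \<le> e"
  shows "sqrt (a\<^sup>2 + b\<^sup>2) \<le> sqrt 2 * e"
proof -
  have "a\<^sup>2 \<le> e\<^sup>2" "b\<^sup>2 \<le> e\<^sup>2"
    using power_mono[OF assms(1), of 2] power_mono[OF assms(2), of 2] by simp_all
  then have "a\<^sup>2 + b\<^sup>2 \<le> (sqrt 2 * e)\<^sup>2"
    by (simp add: power_mult_distrib)
  then show ?thesis
    using assms by (simp add: real_sqrt_le_iff')
qed

lemma norm_Xvec_diff_le:
  assumes "\<bar>t - t'\<bar> \<le> e" "\<bar>f - f'\<bar> \<le> e"
  shows "norm (Xvec t f - Xvec t' f') \<le> sqrt 2 * e"
proof -
  define a b where "a = t - t'" and "b = f - f'"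
  define \<gamma> where "\<gamma> s = Xvec (t' + s * a) (f' + s * b)" for s
  define \<gamma>' :: "real \<Rightarrow> real^3" where "\<gamma>' s = vector
    [- a * sin (t' + s * a) * sin (f' + s * b) + b * cos (t' + s * a) * cos (f' + s * b),
     a * cos (t' + s * a) * sin (f' + s * b) + b * sin (t' + s * a) * cos (f' + s * b),
     - b * sin (f' + s * b)]" for s
  have "norm (\<gamma> 1 - \<gamma> 0) \<le> sqrt (a\<^sup>2 + b\<^sup>2)"
  proof (rule norm_diff_le_of_inner_derivative)
    show "((\<lambda>s. inner d (\<gamma> s)) has_real_derivative inner d (\<gamma>' s)) (at s)" for d s
      unfolding \<gamma>_def \<gamma>'_def inner_vec3 Xvec_component vector_3
      by (rule derivative_eq_intros refl | simp)+ (simp add: algebra_simps)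
    have "(norm (\<gamma>' s))\<^sup>2 = (a * sin (f' + s * b))\<^sup>2 + b\<^sup>2" for s
      unfolding \<gamma>'_def norm_vec3_power2 vector_3
      using sin_cos_squared_add[of "t' + s * a"] sin_cos_squared_add[of "f' + s * b"] by algebra
    then show "norm (\<gamma>' s) \<le> sqrt (a\<^sup>2 + b\<^sup>2)" for s
      using mult_left_le[OF abs_square_le_1[THEN iffD2, OF abs_sin_le_one], of "a\<^sup>2" "f' + s * b"]
      by (intro real_le_rsqrt) (simp add: power_mult_distrib)
  qed
  also have "\<dots> \<le> sqrt 2 * e"
    using assms by (simp add: a_def b_def sqrt_sum_squares_le)
  finally show ?thesis
    by (simp add: \<gamma>_def a_def b_def)
qed

(* The first two squares on the right are the squared speed of s \<mapsto> M(t + s a, f + s b) p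
   at s = 0, where c, d are the coordinates of (p1, p2) in the frame rotated by t, p = p3,
   and co, si = cos f, sin f. *)
lemma Mmat_derivative_defect_sum_squares:
  fixes a b c d p co si :: real
  assumes "co\<^sup>2 + si\<^sup>2 = 1"
  shows "(a\<^sup>2 + b\<^sup>2) * (c\<^sup>2 + d\<^sup>2 + p\<^sup>2) = (a * c)\<^sup>2 + (b * (si * c + co * p) - a * co * d)\<^sup>2
    + (a * p + b * d)\<^sup>2 + (a * si * d + b * (co * c - si * p))\<^sup>2"
  using assms by algebra

lemma norm_Mmat_mult_diff_le:
  assumes "\<bar>t - t'\<bar> \<le> e" "\<bar>f - f'\<bar> \<le> e"
  shows "norm (Mmat t f *v p - Mmat t' f' *v p) \<le> sqrt 2 * e * norm p"
proof -
  define a b where "a = t - t'" and "b = f - f'"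
  define \<gamma> where "\<gamma> s = Mmat (t' + s * a) (f' + s * b) *v p" for s
  define c where "c s = cos (t' + s * a) * p$1 + sin (t' + s * a) * p$2" for s
  define d where "d s = - sin (t' + s * a) * p$1 + cos (t' + s * a) * p$2" for s
  define \<gamma>' :: "real \<Rightarrow> real^2" where "\<gamma>' s = vector
    [- a * c s,
     b * (sin (f' + s * b) * c s + cos (f' + s * b) * p$3) - a * cos (f' + s * b) * d s]" for s
  have "norm (\<gamma> 1 - \<gamma> 0) \<le> sqrt (a\<^sup>2 + b\<^sup>2) * norm p"
  proof (rule norm_diff_le_of_inner_derivative)
    show "((\<lambda>s. inner v (\<gamma> s)) has_real_derivative inner v (\<gamma>' s)) (at s)" for v s
      unfolding \<gamma>_def \<gamma>'_def c_def d_def inner_vec2 Mmat_mult_component vector_2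
      by (rule derivative_eq_intros refl | simp)+ (simp add: algebra_simps)
    fix s
    let ?co = "cos (f' + s * b)" and ?si = "sin (f' + s * b)"
    have "(norm p)\<^sup>2 = (c s)\<^sup>2 + (d s)\<^sup>2 + (p$3)\<^sup>2"
      unfolding norm_vec3_power2 c_def d_def using sin_cos_squared_add[of "t' + s * a"] by algebra
    then have "(sqrt (a\<^sup>2 + b\<^sup>2) * norm p)\<^sup>2 = (a\<^sup>2 + b\<^sup>2) * ((c s)\<^sup>2 + (d s)\<^sup>2 + (p$3)\<^sup>2)"
      by (simp add: power_mult_distrib)
    also have "\<dots> = (a * c s)\<^sup>2 + (b * (?si * c s + ?co * p$3) - a * ?co * d s)\<^sup>2
        + (a * p$3 + b * d s)\<^sup>2 + (a * ?si * d s + b * (?co * c s - ?si * p$3))\<^sup>2"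
      by (rule Mmat_derivative_defect_sum_squares) simp
    also have "(a * c s)\<^sup>2 + (b * (?si * c s + ?co * p$3) - a * ?co * d s)\<^sup>2 = (norm (\<gamma>' s))\<^sup>2"
      unfolding \<gamma>'_def norm_vec2_power2 vector_2 by simp
    finally have "(norm (\<gamma>' s))\<^sup>2 \<le> (sqrt (a\<^sup>2 + b\<^sup>2) * norm p)\<^sup>2"
      by (simp only: le_add_same_cancel1 add.assoc zero_le_power2 add_nonneg_nonneg)
    then show "norm (\<gamma>' s) \<le> sqrt (a\<^sup>2 + b\<^sup>2) * norm p"
      by (rule power2_le_imp_le) simp
  qed
  also have "\<dots> \<le> sqrt 2 * e * norm p"
    using assms by (simp add: a_def b_def sqrt_sum_squares_le mult_right_mono)
  finally show ?thesis
    by (simp add: \<gamma>_def a_def b_def)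
qed

lemma norm_rotR_mult_diff_le: "norm (rotR a *v v - rotR a' *v v) \<le> \<bar>a - a'\<bar> * norm v"
proof -
  define h where "h = (a - a') / 2"
  then have a_diff: "a - a' = 2 * h"
    by simp
  have "(norm (rotR a *v v - rotR a' *v v))\<^sup>2 = (2 - 2 * cos (a - a')) * (norm v)\<^sup>2"
    unfolding norm_vec2_power2 vector_minus_component rotR_mult_component cos_diff
    using sin_cos_squared_add[of a] sin_cos_squared_add[of a'] by algebra
  also have "\<dots> = 4 * (sin h)\<^sup>2 * (norm v)\<^sup>2"
    unfolding a_diff cos_double_sin by simp
  also have "\<dots> \<le> (2 * h)\<^sup>2 * (norm v)\<^sup>2"
    using mult_right_mono[OF power_mono[OF abs_sin_x_le_abs_x[of h], of 2] zero_le_power2[of "norm v"]]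
    by (simp add: power_mult_distrib)
  also have "\<dots> = (\<bar>a - a'\<bar> * norm v)\<^sup>2"
    by (simp add: a_diff power_mult_distrib)
  finally show ?thesis
    by (rule power2_le_imp_le) simp
qed

definition det2 :: "real^2 \<Rightarrow> real^2 \<Rightarrow> real" where
  "det2 x y = x$1 * y$2 - x$2 * y$1"

lemma inner_rotR_pi_half: "inner (rotR (pi / 2) *v x) y = det2 x y"
  by (simp add: inner_vec2 rotR_mult_component det2_def algebra_simps)

lemma abs_det2_le: "\<bar>det2 x y\<bar> \<le> norm x * norm y"
proof -
  have "(norm x * norm y)\<^sup>2 = (det2 x y)\<^sup>2 + (inner x y)\<^sup>2"
    unfolding power_mult_distrib norm_vec2_power2 det2_def inner_vec2 by algebra
  then have "\<bar>det2 x y\<bar>\<^sup>2 \<le> (norm x * norm y)\<^sup>2"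
    by simp
  then show ?thesis
    by (rule power2_le_imp_le) simp
qed

lemma det2_diff: "det2 x y - det2 x' y' = det2 (x - x') y + det2 x' (y - y')"
  by (simp add: det2_def algebra_simps)

lemma det2_cyclic_combination:
  "det2 v2 v3 *\<^sub>R v1 + det2 v3 v1 *\<^sub>R v2 + det2 v1 v2 *\<^sub>R v3 = 0"
  by (simp add: det2_def vec_eq_iff forall_2 algebra_simps)

lemma det2_pos_of_perturbed:
  assumes "2 * \<eta> < det2 x' y'" "norm (x - x') \<le> \<eta>" "norm (y - y') \<le> \<eta>"
    and "norm x' \<le> 1" "norm y \<le> 1"
  shows "0 < det2 x y"
proof -
  have "\<bar>det2 (x - x') y\<bar> \<le> \<eta>"
    using abs_det2_le[of "x - x'" y] mult_mono[OF assms(2,5) order_trans[OF norm_ge_zero assms(2)]] by simp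
  moreover have "\<bar>det2 x' (y - y')\<bar> \<le> \<eta>"
    using abs_det2_le[of x' "y - y'"] mult_mono[OF assms(4,3)] by simp
  ultimately have "det2 x' y' - det2 x y \<le> 2 * \<eta>"
    using det2_diff[of x y x' y'] by linarith
  with assms(1) show ?thesis
    by simp
qed

lemma inner_pos_of_perturbed:
  fixes x y p :: "'a::real_inner"
  assumes "\<eta> < inner x p" "norm p \<le> 1" "norm (y - x) \<le> \<eta>"
  shows "0 < inner y p"
proof -
  have "\<bar>inner (y - x) p\<bar> \<le> \<eta>"
    using Cauchy_Schwarz_ineq2[of "y - x" p] mult_mono[OF assms(3,2) order_trans[OF norm_ge_zero assms(3)]]
    by simp
  with assms(1) show ?thesis
    by (simp add: inner_diff_left)
qed

lemma convex_cone_condition: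
  fixes v :: "'a::real_inner"
  assumes "0 \<le> \<kappa>"
  shows "convex {u. \<kappa> * norm v * norm (v - u) \<le> inner v (v - u)}"
proof (rule convexI, simp only: mem_Collect_eq)
  fix x y :: 'a and s t :: real
  assume x: "\<kappa> * norm v * norm (v - x) \<le> inner v (v - x)"
    and y: "\<kappa> * norm v * norm (v - y) \<le> inner v (v - y)"
    and st: "0 \<le> s" "0 \<le> t" "s + t = 1"
  have split: "v - (s *\<^sub>R x + t *\<^sub>R y) = s *\<^sub>R (v - x) + t *\<^sub>R (v - y)"
    using st by (simp add: algebra_simps flip: scaleR_add_left)
  have "\<kappa> * norm v * norm (v - (s *\<^sub>R x + t *\<^sub>R y))
      \<le> \<kappa> * norm v * (s * norm (v - x) + t * norm (v - y))"
    unfolding split using norm_triangle_ineq[of "s *\<^sub>R (v - x)" "t *\<^sub>R (v - y)"] st assms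
    by (intro mult_left_mono) simp_all
  also have "\<dots> = s * (\<kappa> * norm v * norm (v - x)) + t * (\<kappa> * norm v * norm (v - y))"
    by (simp add: algebra_simps)
  also have "\<dots> \<le> s * inner v (v - x) + t * inner v (v - y)"
    using x y st by (intro add_mono mult_left_mono)
  also have "\<dots> = inner v (v - (s *\<^sub>R x + t *\<^sub>R y))"
    unfolding split by (simp add: inner_add_right)
  finally show "\<kappa> * norm v * norm (v - (s *\<^sub>R x + t *\<^sub>R y)) \<le> inner v (v - (s *\<^sub>R x + t *\<^sub>R y))" .
qed

lemma cone_condition_norm_diff_ge:
  fixes v w :: "'a::real_inner"
  assumes "0 \<le> \<kappa>" "v \<noteq> 0"
    and cone: "\<And>u. u \<in> T \<Longrightarrow> \<kappa> * norm v * norm (v - u) \<le> inner v (v - u)"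
    and w: "w \<in> interior (convex hull T)" and "norm v \<le> norm w"
  shows "2 * \<kappa> * norm v \<le> norm (v - w)"
proof -
  let ?C = "{u. \<kappa> * norm v * norm (v - u) \<le> inner v (v - u)}"
  have hull: "convex hull T \<subseteq> ?C"
    using cone by (intro hull_minimal convex_cone_condition assms(1)) auto
  also have "?C \<subseteq> {u. inner v u \<le> inner v v}"
  proof
    fix u
    assume "u \<in> ?C"
    moreover have "0 \<le> \<kappa> * norm v * norm (v - u)"
      using assms(1) by simp
    ultimately show "u \<in> {u. inner v u \<le> inner v v}"
      by (simp add: inner_diff_right)
  qed
  finally have "interior (convex hull T) \<subseteq> interior {u. inner v u \<le> inner v v}"
    by (rule interior_mono)
  with w assms(2) have "0 < norm (v - w)"
    by auto
  have "\<kappa> * norm v * norm (v - w) \<le> inner v (v - w)"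
    using hull w interior_subset by blast
  moreover have "2 * inner v (v - w) \<le> norm (v - w) * norm (v - w)"
    using power_mono[OF \<open>norm v \<le> norm w\<close>, of 2] dot_norm_neg[of v w]
    by (simp add: inner_diff_right power2_norm_eq_inner[symmetric] power2_eq_square)
  ultimately have "(2 * \<kappa> * norm v) * norm (v - w) \<le> norm (v - w) * norm (v - w)"
    by linarith
  with \<open>0 < norm (v - w)\<close> show ?thesis
    by simp
qed

lemma cone_condition_of_perturbed:
  fixes A B :: "real^'n^'m" and x y :: "real^'n"
  assumes diff: "\<And>p. norm (A *v p - B *v p) \<le> \<eta> * norm p"
    and A_le: "\<And>p. norm (A *v p) \<le> norm p" and B_le: "\<And>p. norm (B *v p) \<le> norm p"
    and x: "norm x \<le> 1" and y: "norm y \<le> 1" and "0 \<le> \<kappa>" "0 < \<eta>" "2 * \<eta> \<le> c"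
    and hyp: "\<kappa> < (inner (B *v x) (B *v (x - y)) - c * norm (x - y))
                   / ((norm (B *v x) + \<eta>) * (norm (B *v (x - y)) + 2 * \<eta>))"
  shows "\<kappa> * norm (A *v x) * norm (A *v x - A *v y) \<le> inner (A *v x) (A *v x - A *v y)"
proof -
  define d where "d = x - y"
  have Ad: "A *v x - A *v y = A *v d"
    by (simp add: d_def matrix_vector_mult_diff_distrib)
  have d: "norm d \<le> 2"
    using norm_triangle_ineq4[of x y] x y by (simp add: d_def)
  have Ax: "norm (A *v x - B *v x) \<le> \<eta>"
    using diff[of x] mult_left_le[OF x] \<open>0 < \<eta>\<close> by (meson less_imp_le order_trans)
  have "\<bar>inner (A *v x - B *v x) (A *v d)\<bar> \<le> \<eta> * norm d"
    using Cauchy_Schwarz_ineq2[of "A *v x - B *v x" "A *v d"] mult_mono[OF Ax A_le[of d]] \<open>0 < \<eta>\<close> by simp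
  moreover have "\<bar>inner (B *v x) (A *v d - B *v d)\<bar> \<le> \<eta> * norm d"
    using Cauchy_Schwarz_ineq2[of "B *v x" "A *v d - B *v d"]
      mult_mono[OF order_trans[OF B_le x] diff[of d]] by simp
  moreover have "inner (A *v x) (A *v d) - inner (B *v x) (B *v d)
      = inner (A *v x - B *v x) (A *v d) + inner (B *v x) (A *v d - B *v d)"
    by (simp add: inner_diff_left inner_diff_right)
  moreover have "2 * \<eta> * norm d \<le> c * norm d"
    using \<open>2 * \<eta> \<le> c\<close> by (simp add: mult_right_mono)
  ultimately have num: "inner (B *v x) (B *v d) - c * norm d \<le> inner (A *v x) (A *v d)"
    by linarith
  have "norm (A *v x) \<le> norm (B *v x) + \<eta>"
    using Ax norm_triangle_ineq2[of "A *v x" "B *v x"] by linarith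
  moreover have "norm (A *v d) \<le> norm (B *v d) + 2 * \<eta>"
    using diff[of d] mult_left_mono[OF d, of \<eta>] \<open>0 < \<eta>\<close> norm_triangle_ineq2[of "A *v d" "B *v d"]
    by linarith
  ultimately have den: "norm (A *v x) * norm (A *v d) \<le> (norm (B *v x) + \<eta>) * (norm (B *v d) + 2 * \<eta>)"
    using \<open>0 < \<eta>\<close> by (intro mult_mono) simp_all
  have "0 < (norm (B *v x) + \<eta>) * (norm (B *v d) + 2 * \<eta>)"
    using \<open>0 < \<eta>\<close> by (simp add: add_nonneg_pos)
  with hyp have "\<kappa> * ((norm (B *v x) + \<eta>) * (norm (B *v d) + 2 * \<eta>))
      < inner (B *v x) (B *v d) - c * norm d"
    by (simp add: d_def pos_less_divide_eq)
  moreover have "\<kappa> * (norm (A *v x) * norm (A *v d))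
      \<le> \<kappa> * ((norm (B *v x) + \<eta>) * (norm (B *v d) + 2 * \<eta>))"
    using den \<open>0 \<le> \<kappa>\<close> by (rule mult_left_mono)
  ultimately show ?thesis
    using num by (simp add: Ad mult.assoc)
qed

lemma norm_orthogonal_matrix_mult:
  fixes L :: "real^'n^'n"
  assumes "orthogonal_matrix L"
  shows "norm (L *v x) = norm x"
proof -
  have "orthogonal_transformation (\<lambda>x. L *v x)"
    using assms by (simp add: orthogonal_transformation_matrix)
  then show ?thesis
    by (rule orthogonal_transformation_norm)
qed

lemma abs_inner_sum_same_sign:
  fixes Y :: "'a::real_inner" and Q :: "'i \<Rightarrow> 'a"
  assumes "\<forall>i\<in>I. 0 \<le> a i"
    and "(\<forall>i\<in>I. 0 < inner Y (Q i)) \<or> (\<forall>i\<in>I. inner Y (Q i) < 0)"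
  shows "\<bar>inner Y (\<Sum>i\<in>I. a i *\<^sub>R Q i)\<bar> = (\<Sum>i\<in>I. a i * \<bar>inner Y (Q i)\<bar>)"
  using assms(2)
proof
  assume pos: "\<forall>i\<in>I. 0 < inner Y (Q i)"
  then have "(\<Sum>i\<in>I. a i * \<bar>inner Y (Q i)\<bar>) = (\<Sum>i\<in>I. a i * inner Y (Q i))"
    by (intro sum.cong) auto
  moreover have "0 \<le> (\<Sum>i\<in>I. a i * inner Y (Q i))"
    using pos assms(1) by (intro sum_nonneg) (simp add: less_imp_le)
  ultimately show ?thesis
    by (simp add: inner_sum_right)
next
  assume neg: "\<forall>i\<in>I. inner Y (Q i) < 0"
  then have "(\<Sum>i\<in>I. a i * \<bar>inner Y (Q i)\<bar>) = - (\<Sum>i\<in>I. a i * inner Y (Q i))"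
    by (simp add: sum_negf[symmetric]) (intro sum.cong; auto)
  moreover have "(\<Sum>i\<in>I. a i * inner Y (Q i)) \<le> 0"
    using neg assms(1) by (intro sum_nonpos) (simp add: mult_nonneg_nonpos less_imp_le)
  ultimately show ?thesis
    by (simp add: inner_sum_right)
qed

lemma exists_abs_inner_le_of_positive_combination:
  fixes X Y :: "'a::real_inner" and Q :: "'i \<Rightarrow> 'a" and a :: "'i \<Rightarrow> real" and I :: "'i set"
  defines "Z \<equiv> \<Sum>i\<in>I. a i *\<^sub>R Q i"
  assumes "finite I" "I \<noteq> {}" "\<forall>i\<in>I. 0 < a i"
    and "norm Y = 1" "\<bar>inner X Z\<bar> = norm Z"
    and "(\<forall>i\<in>I. 0 < inner X (Q i)) \<or> (\<forall>i\<in>I. inner X (Q i) < 0)"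
    and "(\<forall>i\<in>I. 0 < inner Y (Q i)) \<or> (\<forall>i\<in>I. inner Y (Q i) < 0)"
  shows "\<exists>i\<in>I. \<bar>inner Y (Q i)\<bar> \<le> \<bar>inner X (Q i)\<bar>"
proof (rule ccontr)
  assume "\<not> ?thesis"
  then have "(\<Sum>i\<in>I. a i * \<bar>inner X (Q i)\<bar>) < (\<Sum>i\<in>I. a i * \<bar>inner Y (Q i)\<bar>)"
    using assms(2-4) by (intro sum_strict_mono) auto
  also have "\<dots> = \<bar>inner Y Z\<bar>"
    using assms(4,8) by (simp add: Z_def abs_inner_sum_same_sign less_imp_le)
  also have "\<dots> \<le> norm Z"
    using Cauchy_Schwarz_ineq2[of Y Z] assms(5) by simp
  also have "\<dots> = (\<Sum>i\<in>I. a i * \<bar>inner X (Q i)\<bar>)"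
    using assms(4,6,7) by (simp add: Z_def abs_inner_sum_same_sign less_imp_le)
  finally show False
    by simp
qed

lemma abs_inner_Xvec_eq_norm_if_Mmat_mult_eq_0:
  assumes "Mmat t f *v z = 0"
  shows "\<bar>inner (Xvec t f) z\<bar> = norm z"
proof -
  have "(norm z)\<^sup>2 = (inner (Xvec t f) z)\<^sup>2"
    using norm_Mmat_mult_power2[of t f z] assms by simp
  then show ?thesis
    by (metis norm_ge_zero power2_abs power2_eq_iff_nonneg abs_ge_zero)
qed

lemma exists_vertex_norm_Mmat_mult_le:
  fixes P Q :: "nat \<Rightarrow> real^3"
  assumes cong: "congruent_triples (P 1) (P 2) (P 3) (Q 1) (Q 2) (Q 3)"
    and sign_P: "(\<forall>i\<in>{1,2,3}. 0 < inner (Xvec t1 f1) (P i)) \<or> (\<forall>i\<in>{1,2,3}. inner (Xvec t1 f1) (P i) < 0)"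
    and sign_Q: "(\<forall>i\<in>{1,2,3}. 0 < inner (Xvec t2 f2) (Q i)) \<or> (\<forall>i\<in>{1,2,3}. inner (Xvec t2 f2) (Q i) < 0)"
    and spanning: "0 < det2 (Mmat t2 f2 *v Q 1) (Mmat t2 f2 *v Q 2)"
      "0 < det2 (Mmat t2 f2 *v Q 2) (Mmat t2 f2 *v Q 3)"
      "0 < det2 (Mmat t2 f2 *v Q 3) (Mmat t2 f2 *v Q 1)"
  shows "\<exists>i\<in>{1,2,3}. norm (Mmat t2 f2 *v Q i) \<le> norm (Mmat t1 f1 *v P i)"
proof -
  obtain L :: "real^3^3" where L: "orthogonal_matrix L" and PL: "\<forall>i\<in>{1,2,3}. P i = L *v Q i"
    using cong by (auto simp: congruent_triples_def)
  define Y where "Y = transpose L *v Xvec t1 f1"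
  have inner_Y: "inner (Xvec t1 f1) (P i) = inner Y (Q i)" if "i \<in> {1,2,3}" for i
    using PL that by (auto simp: Y_def dot_lmul_matrix)
  have norm_P: "norm (P i) = norm (Q i)" if "i \<in> {1,2,3}" for i
    using PL that norm_orthogonal_matrix_mult[OF L] by auto
  have "norm Y = 1"
    using norm_orthogonal_matrix_mult[of "transpose L"] L by (simp add: Y_def)
  define v where "v i = Mmat t2 f2 *v Q i" for i
  define a :: "nat \<Rightarrow> real" where "a i =
    (if i = 1 then det2 (v 2) (v 3) else if i = 2 then det2 (v 3) (v 1) else det2 (v 1) (v 2))" for i
  define Z where "Z = (\<Sum>i\<in>{1,2,3}. a i *\<^sub>R Q i)"
  have "Mmat t2 f2 *v Z = det2 (v 2) (v 3) *\<^sub>R v 1 + det2 (v 3) (v 1) *\<^sub>R v 2 + det2 (v 1) (v 2) *\<^sub>R v 3"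
    by (simp add: Z_def a_def v_def matrix_vector_right_distrib matrix_vector_mult_scaleR)
  then have "\<bar>inner (Xvec t2 f2) Z\<bar> = norm Z"
    by (simp add: det2_cyclic_combination abs_inner_Xvec_eq_norm_if_Mmat_mult_eq_0)
  moreover have "\<forall>i\<in>{1,2,3}. 0 < a i"
    using spanning by (simp add: a_def v_def)
  moreover have "(\<forall>i\<in>{1,2,3}. 0 < inner Y (Q i)) \<or> (\<forall>i\<in>{1,2,3}. inner Y (Q i) < 0)"
    using sign_P inner_Y by simp
  ultimately have "\<exists>i\<in>{1,2,3}. \<bar>inner Y (Q i)\<bar> \<le> \<bar>inner (Xvec t2 f2) (Q i)\<bar>"
    using sign_Q \<open>norm Y = 1\<close> unfolding Z_def
    by (intro exists_abs_inner_le_of_positive_combination) simp_all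
  then obtain i where i: "i \<in> {1,2,3}" and le: "\<bar>inner Y (Q i)\<bar> \<le> \<bar>inner (Xvec t2 f2) (Q i)\<bar>"
    by blast
  have "(norm (Mmat t2 f2 *v Q i))\<^sup>2 \<le> (norm (Mmat t1 f1 *v P i))\<^sup>2"
    using power_mono[OF le, of 2] i by (simp add: norm_Mmat_mult_power2 inner_Y norm_P)
  then have "norm (Mmat t2 f2 *v Q i) \<le> norm (Mmat t1 f1 *v P i)"
    by (rule power2_le_imp_le) simp
  with i show ?thesis
    by blast
qed

lemma norm_rotR_Mmat_mult_diff_le:
  assumes "\<bar>a - a'\<bar> \<le> e" "\<bar>t - t'\<bar> \<le> e" "\<bar>f - f'\<bar> \<le> e" "norm p \<le> 1"
  shows "norm (rotR a *v (Mmat t f *v p) - rotR a' *v (Mmat t' f' *v p)) \<le> (1 + sqrt 2) * e"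
proof -
  have "0 \<le> e"
    using assms(1) by linarith
  let ?u = "rotR a *v (Mmat t f *v p) - rotR a' *v (Mmat t f *v p)"
    and ?v = "rotR a' *v (Mmat t f *v p - Mmat t' f' *v p)"
  have u: "norm ?u \<le> e"
    using order_trans[OF norm_rotR_mult_diff_le
        mult_mono[OF assms(1) order_trans[OF norm_Mmat_mult_le[of t f p] assms(4)] \<open>0 \<le> e\<close> norm_ge_zero]]
    by simp
  have v: "norm ?v \<le> sqrt 2 * e"
    using order_trans[OF norm_Mmat_mult_diff_le[OF assms(2,3), of p] mult_left_le[OF assms(4), of "sqrt 2 * e"]]
      \<open>0 \<le> e\<close> by simp
  have "rotR a *v (Mmat t f *v p) - rotR a' *v (Mmat t' f' *v p) = ?u + ?v"
    by (simp add: matrix_vector_mult_diff_distrib)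
  moreover have "norm (?u + ?v) \<le> (1 + sqrt 2) * e"
    using norm_triangle_ineq[of ?u ?v] u v by (simp add: distrib_right)
  ultimately show ?thesis
    by (simp only:)
qed

lemma Mmat_cone_condition_of_margin:
  fixes S :: "(real^3) set" and q :: "real^3" and u :: "real^2"
  assumes "0 < \<epsilon>" "0 \<le> \<kappa>" and t: "\<bar>t - th\<bar> \<le> \<epsilon>" and f: "\<bar>f - ph\<bar> \<le> \<epsilon>"
    and S: "\<forall>s\<in>S. norm s \<le> 1" and "q \<in> S"
    and margin: "\<forall>s\<in>S - {q}.
       (inner (Mmat th ph *v q) (Mmat th ph *v (q - s)) - 2 * \<epsilon> * norm (q - s) * (sqrt 2 + \<epsilon>))
       / ((norm (Mmat th ph *v q) + sqrt 2 * \<epsilon>) * (norm (Mmat th ph *v (q - s)) + 2 * sqrt 2 * \<epsilon>))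
       > \<kappa>"
    and "u \<in> (\<lambda>s. Mmat t f *v s) ` S"
  shows "\<kappa> * norm (Mmat t f *v q) * norm (Mmat t f *v q - u) \<le> inner (Mmat t f *v q) (Mmat t f *v q - u)"
proof -
  obtain s where "s \<in> S" and u: "u = Mmat t f *v s"
    using \<open>u \<in> _\<close> by blast
  show ?thesis
  proof (cases "s = q")
    case False
    have reorder: "2 * \<epsilon> * norm (q - s) * (sqrt 2 + \<epsilon>) = 2 * \<epsilon> * (sqrt 2 + \<epsilon>) * norm (q - s)"
        "2 * sqrt 2 * \<epsilon> = 2 * (sqrt 2 * \<epsilon>)"
      by simp_all
    have "\<kappa> < (inner (Mmat th ph *v q) (Mmat th ph *v (q - s)) - 2 * \<epsilon> * norm (q - s) * (sqrt 2 + \<epsilon>))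
        / ((norm (Mmat th ph *v q) + sqrt 2 * \<epsilon>) * (norm (Mmat th ph *v (q - s)) + 2 * sqrt 2 * \<epsilon>))"
      using margin \<open>s \<in> S\<close> False by blast
    then have hyp: "\<kappa> < (inner (Mmat th ph *v q) (Mmat th ph *v (q - s)) - 2 * \<epsilon> * (sqrt 2 + \<epsilon>) * norm (q - s))
        / ((norm (Mmat th ph *v q) + sqrt 2 * \<epsilon>) * (norm (Mmat th ph *v (q - s)) + 2 * (sqrt 2 * \<epsilon>)))"
      by (simp only: reorder)
    have "norm q \<le> 1" "norm s \<le> 1"
      using S \<open>q \<in> S\<close> \<open>s \<in> S\<close> by auto
    moreover have \<eta>: "0 < sqrt 2 * \<epsilon>" "2 * (sqrt 2 * \<epsilon>) \<le> 2 * \<epsilon> * (sqrt 2 + \<epsilon>)"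
      using \<open>0 < \<epsilon>\<close> by (auto simp: algebra_simps)
    ultimately show ?thesis
      using cone_condition_of_perturbed[OF norm_Mmat_mult_diff_le[OF t f] norm_Mmat_mult_le
          norm_Mmat_mult_le _ _ \<open>0 \<le> \<kappa>\<close> \<eta> hyp]
      by (simp add: u)
  qed (simp add: u)
qed

lemma one_plus_two_sqrt2_le_two_sqrt5: "1 + 2 * sqrt 2 \<le> 2 * sqrt (5::real)"
proof -
  have "sqrt 2 \<le> 3 / 2"
    by (rule real_le_lsqrt) (simp_all add: power2_eq_square)
  moreover have "2 \<le> sqrt 5"
    by (rule real_le_rsqrt) (simp add: power2_eq_square)
  ultimately show ?thesis
    by simp
qed

lemma rotR_Mmat_vertex_not_in_interior:
  fixes S :: "(real^3) set" and p q :: "real^3" and \<epsilon> \<delta> r :: real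
  defines "\<kappa> \<equiv> (sqrt 5 * \<epsilon> + \<delta>) / r"
  assumes "0 < \<epsilon>" "0 < r"
    and t1: "\<bar>t1 - th1\<bar> \<le> \<epsilon>" and f1: "\<bar>f1 - ph1\<bar> \<le> \<epsilon>"
    and t2: "\<bar>t2 - th2\<bar> \<le> \<epsilon>" and f2: "\<bar>f2 - ph2\<bar> \<le> \<epsilon>" and a: "\<bar>a - \<alpha>\<bar> \<le> \<epsilon>"
    and S: "\<forall>s\<in>S. norm s \<le> 1" and "q \<in> S" and "norm p \<le> 1"
    and far: "r + sqrt 2 * \<epsilon> < norm (Mmat th2 ph2 *v q)"
    and close: "norm (rotR \<alpha> *v (Mmat th1 ph1 *v p) - Mmat th2 ph2 *v q) / 2 \<le> \<delta>"
    and margin: "\<forall>s\<in>S - {q}.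
       (inner (Mmat th2 ph2 *v q) (Mmat th2 ph2 *v (q - s)) - 2 * \<epsilon> * norm (q - s) * (sqrt 2 + \<epsilon>))
       / ((norm (Mmat th2 ph2 *v q) + sqrt 2 * \<epsilon>) * (norm (Mmat th2 ph2 *v (q - s)) + 2 * sqrt 2 * \<epsilon>))
       > \<kappa>"
    and longer: "norm (Mmat t2 f2 *v q) \<le> norm (Mmat t1 f1 *v p)"
  shows "rotR a *v (Mmat t1 f1 *v p) \<notin> interior (convex hull ((\<lambda>s. Mmat t2 f2 *v s) ` S))"
proof
  define v vb w wb where "v = Mmat t2 f2 *v q" and "vb = Mmat th2 ph2 *v q"
    and "w = rotR a *v (Mmat t1 f1 *v p)" and "wb = rotR \<alpha> *v (Mmat th1 ph1 *v p)"
  assume w_int: "w \<in> interior (convex hull ((\<lambda>s. Mmat t2 f2 *v s) ` S))"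
  have "0 \<le> \<delta>"
    using close order_trans[OF _ close, of 0] by simp
  then have "0 < \<kappa>"
    using \<open>0 < \<epsilon>\<close> \<open>0 < r\<close> unfolding \<kappa>_def by (intro divide_pos_pos add_pos_nonneg) simp_all
  have v_vb: "norm (v - vb) \<le> sqrt 2 * \<epsilon>"
    using order_trans[OF norm_Mmat_mult_diff_le[OF t2 f2, of q] mult_left_le[of "norm q"]]
      S \<open>q \<in> S\<close> \<open>0 < \<epsilon>\<close> by (simp add: v_def vb_def)
  then have "r < norm v"
    using far norm_triangle_ineq3[of vb v] by (simp add: vb_def norm_minus_commute)
  then have "2 * \<kappa> * norm v \<le> norm (v - w)"
    using Mmat_cone_condition_of_margin[OF \<open>0 < \<epsilon>\<close> less_imp_le[OF \<open>0 < \<kappa>\<close>] t2 f2 S \<open>q \<in> S\<close> margin]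
      w_int longer \<open>0 < r\<close> \<open>0 < \<kappa>\<close>
    by (intro cone_condition_norm_diff_ge) (auto simp: v_def w_def)
  moreover have "2 * (sqrt 5 * \<epsilon> + \<delta>) < 2 * \<kappa> * norm v"
  proof -
    have "sqrt 5 * \<epsilon> + \<delta> = \<kappa> * r"
      using \<open>0 < r\<close> by (simp add: \<kappa>_def)
    then show ?thesis
      using mult_strict_left_mono[OF \<open>r < norm v\<close> \<open>0 < \<kappa>\<close>] by simp
  qed
  moreover have "norm (v - w) \<le> sqrt 2 * \<epsilon> + 2 * \<delta> + (1 + sqrt 2) * \<epsilon>"
  proof -
    have "norm (wb - w) \<le> (1 + sqrt 2) * \<epsilon>"
      using norm_rotR_Mmat_mult_diff_le[of \<alpha> a \<epsilon> th1 t1 ph1 f1 p] a t1 f1 \<open>norm p \<le> 1\<close>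
      by (simp add: w_def wb_def abs_minus_commute)
    moreover have "norm (vb - wb) \<le> 2 * \<delta>"
      using close by (simp add: vb_def wb_def norm_minus_commute)
    moreover have "norm (v - w) \<le> norm (v - vb) + norm (vb - wb) + norm (wb - w)"
      using norm_triangle_le[OF add_mono[OF norm_triangle_ineq order_refl], of "v - vb" "vb - wb" "wb - w"]
      by simp
    ultimately show ?thesis
      using v_vb by linarith
  qed
  moreover have "(1 + 2 * sqrt 2) * \<epsilon> \<le> 2 * sqrt 5 * \<epsilon>"
    using one_plus_two_sqrt2_le_two_sqrt5 \<open>0 < \<epsilon>\<close> by (intro mult_right_mono) simp_all
  ultimately show False
    by (simp add: algebra_simps)
qed

lemma same_sign_of_perturbed:
  fixes x y :: "'a::real_inner" and p :: "'i \<Rightarrow> 'a" and \<sigma> :: nat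
  assumes "\<sigma> \<in> {0, 1}" "\<forall>i\<in>I. \<eta> < (-1) ^ \<sigma> * inner x (p i)" "\<forall>i\<in>I. norm (p i) \<le> 1"
    and "norm (y - x) \<le> \<eta>"
  shows "(\<forall>i\<in>I. 0 < inner y (p i)) \<or> (\<forall>i\<in>I. inner y (p i) < 0)"
proof (cases "\<sigma> = 0")
  case True
  then show ?thesis
    using assms inner_pos_of_perturbed[of \<eta> x _ y] by simp
next
  case False
  with assms(1) have "\<sigma> = 1"
    by simp
  have "0 < inner y (- p i)" if "i \<in> I" for i
    using assms(2-4) that \<open>\<sigma> = 1\<close> by (intro inner_pos_of_perturbed[of \<eta> x]) auto
  then show ?thesis
    by auto
qed

lemma det2_Mmat_pos_of_perturbed:
  assumes "\<bar>t - t'\<bar> \<le> \<epsilon>" "\<bar>f - f'\<bar> \<le> \<epsilon>" "norm x \<le> 1" "norm y \<le> 1"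
    and "2 * \<epsilon> * (sqrt 2 + \<epsilon>) < det2 (Mmat t' f' *v x) (Mmat t' f' *v y)"
  shows "0 < det2 (Mmat t f *v x) (Mmat t f *v y)"
proof (rule det2_pos_of_perturbed)
  have "0 \<le> \<epsilon>"
    using assms(1) by linarith
  then have "2 * (sqrt 2 * \<epsilon>) \<le> 2 * \<epsilon> * (sqrt 2 + \<epsilon>)"
    by (simp add: algebra_simps)
  with assms(5) show "2 * (sqrt 2 * \<epsilon>) < det2 (Mmat t' f' *v x) (Mmat t' f' *v y)"
    by linarith
  show "norm (Mmat t f *v x - Mmat t' f' *v x) \<le> sqrt 2 * \<epsilon>"
    "norm (Mmat t f *v y - Mmat t' f' *v y) \<le> sqrt 2 * \<epsilon>"
    using norm_Mmat_mult_diff_le[OF assms(1,2)] mult_left_le[OF assms(3)] mult_left_le[OF assms(4)]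
      \<open>0 \<le> \<epsilon>\<close> by (meson order_trans mult_nonneg_nonneg real_sqrt_ge_zero zero_le_numeral)+
  show "norm (Mmat t' f' *v x) \<le> 1" "norm (Mmat t f *v y) \<le> 1"
    using order_trans[OF norm_Mmat_mult_le] assms(3,4) by blast+
qed

lemma det2_Mmat_pos_of_eps_spanning:
  assumes "eps_spanning th ph \<epsilon> x y z" "\<bar>t - th\<bar> \<le> \<epsilon>" "\<bar>f - ph\<bar> \<le> \<epsilon>"
  shows "0 < det2 (Mmat t f *v x) (Mmat t f *v y)" "0 < det2 (Mmat t f *v y) (Mmat t f *v z)"
    "0 < det2 (Mmat t f *v z) (Mmat t f *v x)"
  using assms by (auto simp: eps_spanning_def Let_def inner_rotR_pi_half intro: det2_Mmat_pos_of_perturbed)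

theorem theorem5p16:
  fixes S :: "(real^3) set"
    and P Q :: "nat \<Rightarrow> real^3"
    and \<epsilon> th1 ph1 th2 ph2 \<alpha> :: real
  assumes poly: "is_polyhedron S" and rad: "has_radius_one S"
    and PQin: "\<forall>i\<in>{1,2,3}. P i \<in> S \<and> Q i \<in> S"
    and cong: "congruent_triples (P 1) (P 2) (P 3) (Q 1) (Q 2) (Q 3)"
    and eps: "\<epsilon> > 0"
    and A: "\<exists>\<sigma>P \<sigma>Q :: nat. \<sigma>P \<in> {0,1} \<and> \<sigma>Q \<in> {0,1} \<and>
              (\<forall>i\<in>{1,2,3}. (-1)^\<sigma>P * inner (Xvec th1 ph1) (P i) > sqrt 2 * \<epsilon> \<and>
                             (-1)^\<sigma>Q * inner (Xvec th2 ph2) (Q i) > sqrt 2 * \<epsilon>)"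
    and Sp: "eps_spanning th1 ph1 \<epsilon> (P 1) (P 2) (P 3)"
    and Sq: "eps_spanning th2 ph2 \<epsilon> (Q 1) (Q 2) (Q 3)"
    and B: "\<exists>r \<delta> :: real. r > 0 \<and>
              Min ((\<lambda>i. norm (Mmat th2 ph2 *v Q i)) ` {1,2,3}) > r + sqrt 2 * \<epsilon> \<and>
              \<delta> \<ge> Max ((\<lambda>i. norm (rotR \<alpha> *v (Mmat th1 ph1 *v P i) - Mmat th2 ph2 *v Q i) / 2) ` {1,2,3}) \<and>
              (\<forall>i\<in>{1,2,3}. \<forall>q\<in>S - {Q i}.
                 (inner (Mmat th2 ph2 *v Q i) (Mmat th2 ph2 *v (Q i - q))
                    - 2 * \<epsilon> * norm (Q i - q) * (sqrt 2 + \<epsilon>))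
                 / ((norm (Mmat th2 ph2 *v Q i) + sqrt 2 * \<epsilon>)
                    * (norm (Mmat th2 ph2 *v (Q i - q)) + 2 * sqrt 2 * \<epsilon>))
                 > (sqrt 5 * \<epsilon> + \<delta>) / r)"
  shows "\<not> (\<exists>t1 f1 t2 f2 a :: real.
            \<bar>t1 - th1\<bar> \<le> \<epsilon> \<and> \<bar>f1 - ph1\<bar> \<le> \<epsilon> \<and>
            \<bar>t2 - th2\<bar> \<le> \<epsilon> \<and> \<bar>f2 - ph2\<bar> \<le> \<epsilon> \<and> \<bar>a - \<alpha>\<bar> \<le> \<epsilon> \<and>
            (\<lambda>p. rotR a *v (Mmat t1 f1 *v p)) ` S
              \<subseteq> interior (convex hull ((\<lambda>p. Mmat t2 f2 *v p) ` S)))"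
proof (intro notI, elim exE conjE)
  fix t1 f1 t2 f2 a
  assume t1: "\<bar>t1 - th1\<bar> \<le> \<epsilon>" and f1: "\<bar>f1 - ph1\<bar> \<le> \<epsilon>"
    and t2: "\<bar>t2 - th2\<bar> \<le> \<epsilon>" and f2: "\<bar>f2 - ph2\<bar> \<le> \<epsilon>" and a: "\<bar>a - \<alpha>\<bar> \<le> \<epsilon>"
    and inside: "(\<lambda>p. rotR a *v (Mmat t1 f1 *v p)) ` S \<subseteq> interior (convex hull ((\<lambda>p. Mmat t2 f2 *v p) ` S))"
  have norm_S: "\<forall>s\<in>S. norm s \<le> 1"
    using rad by (simp add: has_radius_one_def)
  with PQin have norm_PQ: "\<forall>i\<in>{1,2,3}. norm (P i) \<le> 1" "\<forall>i\<in>{1,2,3}. norm (Q i) \<le> 1"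
    by auto
  from A obtain \<sigma>P \<sigma>Q :: nat where \<sigma>: "\<sigma>P \<in> {0,1}" "\<sigma>Q \<in> {0,1}"
    and margin: "\<forall>i\<in>{1,2,3}. (-1)^\<sigma>P * inner (Xvec th1 ph1) (P i) > sqrt 2 * \<epsilon> \<and>
                                (-1)^\<sigma>Q * inner (Xvec th2 ph2) (Q i) > sqrt 2 * \<epsilon>"
    by blast
  have sign_P: "(\<forall>i\<in>{1,2,3}. 0 < inner (Xvec t1 f1) (P i)) \<or> (\<forall>i\<in>{1,2,3}. inner (Xvec t1 f1) (P i) < 0)"
    using margin by (intro same_sign_of_perturbed[OF \<sigma>(1) _ norm_PQ(1) norm_Xvec_diff_le[OF t1 f1]]) simp
  have sign_Q: "(\<forall>i\<in>{1,2,3}. 0 < inner (Xvec t2 f2) (Q i)) \<or> (\<forall>i\<in>{1,2,3}. inner (Xvec t2 f2) (Q i) < 0)"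
    using margin by (intro same_sign_of_perturbed[OF \<sigma>(2) _ norm_PQ(2) norm_Xvec_diff_le[OF t2 f2]]) simp
  obtain i where i: "i \<in> {1,2,3}" and longer: "norm (Mmat t2 f2 *v Q i) \<le> norm (Mmat t1 f1 *v P i)"
    using exists_vertex_norm_Mmat_mult_le[OF cong sign_P sign_Q det2_Mmat_pos_of_eps_spanning[OF Sq t2 f2]]
    by blast
  have "rotR a *v (Mmat t1 f1 *v P i) \<notin> interior (convex hull ((\<lambda>s. Mmat t2 f2 *v s) ` S))"
    using B i PQin norm_PQ longer
    by (elim exE conjE, intro rotR_Mmat_vertex_not_in_interior[OF eps _ t1 f1 t2 f2 a norm_S])
      (auto intro: order_trans[OF Max_ge])
  moreover have "rotR a *v (Mmat t1 f1 *v P i) \<in> interior (convex hull ((\<lambda>s. Mmat t2 f2 *v s) ` S))"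
    using inside PQin i by blast
  ultimately show False
    by contradiction
qed

end
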